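(* Let $\beta\ge1$ and suppose there are at least two distinct alternate Lyndon words over a finite alphabet $\mathcal{A}$ attached to $\beta$. Then there exists a weak (i.e. periodic) alternate Lyndon word attached to $\beta$.
   Context: Alternate order: for two words $x=x_1x_2\cdots$, $y=y_1y_2\cdots$ over a finite alphabet of integers, $x\prec y$ iff there is $k$ with $x_i=y_i$ for all $i<k$ and $(-1)^k(x_k-y_k)<0$; $x\preceq y$ iff $x=y$ or $x\prec y$. An alternate Lyndon word is an infinite word $(d_i)_{i\ge1}$ with $d_1d_2\cdots\preceq d_nd_{n+1}\cdots$ for all $n\ge1$; it is weak if equality $d_1d_2\cdots=d_nd_{n+1}\cdots$ holds for some $n>1$ (equivalently, it is purely periodic). Its alternate Lyndon system is the set of infinite words $x$ with $d_1d_2\cdots\preceq x_kx_{k+1}\cdots$ for all $k\ge1$, and its entropy is $\lim_n\frac1n\log H_n$ with $H_n$ the number of words of length $n$ occurring as finite factors of elements of the system. An alternate Lyndon word is attached (associated) to $\beta$ if its alternate Lyndon system has entropy $\log\beta$. *)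

theory Defs
  imports Complex_Main
begin

(* Infinite words x = x_1 x_2 ... are modelled as functions nat => int,
   0-indexed: x 0 = x_1, x k = x_(k+1). *)

(* alternate order: x < y iff first difference at (1-based) position k with
   (-1)^k (x_k - y_k) < 0; 0-based position k corresponds to 1-based k+1. *)
definition alt_less :: "(nat \<Rightarrow> int) \<Rightarrow> (nat \<Rightarrow> int) \<Rightarrow> bool" where
  "alt_less x y \<longleftrightarrow>
     (\<exists>k. (\<forall>i<k. x i = y i) \<and> (-1::int) ^ (k + 1) * (x k - y k) < 0)"

definition alt_le :: "(nat \<Rightarrow> int) \<Rightarrow> (nat \<Rightarrow> int) \<Rightarrow> bool" where
  "alt_le x y \<longleftrightarrow> x = y \<or> alt_less x y"

definition sfx :: "(nat \<Rightarrow> int) \<Rightarrow> nat \<Rightarrow> (nat \<Rightarrow> int)" where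
  "sfx x n = (\<lambda>i. x (n + i))"

definition alt_lyndon :: "int set \<Rightarrow> (nat \<Rightarrow> int) \<Rightarrow> bool" where
  "alt_lyndon A d \<longleftrightarrow> (\<forall>i. d i \<in> A) \<and> (\<forall>n. alt_le d (sfx d n))"

(* weak: d_1 d_2 ... = d_n d_(n+1) ... for some n > 1 *)
definition weak_word :: "(nat \<Rightarrow> int) \<Rightarrow> bool" where
  "weak_word d \<longleftrightarrow> (\<exists>n>0. sfx d n = d)"

definition alt_lyndon_system :: "int set \<Rightarrow> (nat \<Rightarrow> int) \<Rightarrow> (nat \<Rightarrow> int) set" where
  "alt_lyndon_system A d = {x. (\<forall>i. x i \<in> A) \<and> (\<forall>k. alt_le d (sfx x k))}"

definition factors :: "(nat \<Rightarrow> int) set \<Rightarrow> nat \<Rightarrow> int list set" where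
  "factors S n = {map (\<lambda>i. x (k + i)) [0..<n] | x k. x \<in> S}"

definition attached :: "int set \<Rightarrow> real \<Rightarrow> (nat \<Rightarrow> int) \<Rightarrow> bool" where
  "attached A \<beta> d \<longleftrightarrow>
     (\<lambda>n. ln (real (card (factors (alt_lyndon_system A d) n))) / real n) \<longlonglongrightarrow> ln \<beta>"

end

theory Submission
  imports Defs
begin

text \<open>
  Let \<open>d\<^sub>1 \<prec> d\<^sub>2\<close> be alternate Lyndon words attached to \<open>\<beta>\<close> that first differ at
  position \<open>k\<close>, and let \<open>x\<close> be the periodic word repeating the prefix of \<open>d\<^sub>2\<close> of even
  length \<open>n \<in> {k+1, k+2}\<close>. Since \<open>n > k\<close> we have \<open>d\<^sub>1 \<prec> x\<close>, and since \<open>n\<close> is even,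
  \<open>x \<preceq> d\<^sub>2\<close>. If a shift of \<open>x\<close> by \<open>0 < m < n\<close> beat \<open>x\<close>, then depending on where the first
  difference lies and on the parity of \<open>m\<close>, a shift of \<open>d\<^sub>2\<close> would beat \<open>d\<^sub>2\<close>, a border
  of \<open>d\<^sub>2\<close> would make a shift of \<open>d\<^sub>1\<close> beat \<open>d\<^sub>1\<close>, or the shift by \<open>n - m\<close> would beat \<open>x\<close>
  at an earlier position. So \<open>x\<close> is a periodic alternate Lyndon word, and its system is
  squeezed between those of \<open>d\<^sub>2\<close> and \<open>d\<^sub>1\<close>, hence has the same entropy \<open>log \<beta>\<close>.
\<close>

definition alt_less_at :: "(nat \<Rightarrow> int) \<Rightarrow> (nat \<Rightarrow> int) \<Rightarrow> nat \<Rightarrow> bool" where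
  "alt_less_at x y k \<longleftrightarrow> (\<forall>i<k. x i = y i) \<and> (-1::int) ^ (k + 1) * (x k - y k) < 0"

lemma alt_less_iff_alt_less_at: "alt_less x y \<longleftrightarrow> (\<exists>k. alt_less_at x y k)"
  unfolding alt_less_def alt_less_at_def by simp

lemma alt_less_at_cong:
  assumes "\<And>i. i \<le> k \<Longrightarrow> x i = x' i" and "\<And>i. i \<le> k \<Longrightarrow> y i = y' i"
  shows "alt_less_at x y k \<longleftrightarrow> alt_less_at x' y' k"
  using assms unfolding alt_less_at_def by auto

lemma alt_less_at_trans:
  assumes xy: "alt_less_at x y k" and yz: "alt_less_at y z k'"
  shows "alt_less_at x z (min k k')"
proof (cases k k' rule: linorder_cases)
  case equal
  have "(-1::int) ^ (k + 1) * (x k - z k) = (-1) ^ (k + 1) * (x k - y k) + (-1) ^ (k + 1) * (y k - z k)"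
    by (simp add: algebra_simps)
  then show ?thesis
    using xy yz equal unfolding alt_less_at_def by auto
qed (use xy yz in \<open>auto simp: alt_less_at_def\<close>)

lemma alt_less_irrefl: "\<not> alt_less x x"
  unfolding alt_less_iff_alt_less_at alt_less_at_def by simp

lemma alt_less_trans: "alt_less x y \<Longrightarrow> alt_less y z \<Longrightarrow> alt_less x z"
  unfolding alt_less_iff_alt_less_at using alt_less_at_trans by blast

lemma alt_le_trans: "alt_le x y \<Longrightarrow> alt_le y z \<Longrightarrow> alt_le x z"
  unfolding alt_le_def using alt_less_trans by blast

lemma alt_less_linear: "x \<noteq> y \<Longrightarrow> alt_less x y \<or> alt_less y x"
proof -
  assume "x \<noteq> y"
  then have ex: "\<exists>i. x i \<noteq> y i" by auto
  define k where "k = (LEAST i. x i \<noteq> y i)"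
  have "x k \<noteq> y k" unfolding k_def using LeastI_ex[OF ex] .
  moreover have "\<forall>i<k. x i = y i" unfolding k_def using not_less_Least by blast
  moreover have "(-1::int) ^ (k + 1) \<in> {1, -1}"
    by (cases "even (k + 1)") auto
  ultimately have "alt_less_at x y k \<or> alt_less_at y x k"
    unfolding alt_less_at_def by (auto simp: algebra_simps)
  then show ?thesis unfolding alt_less_iff_alt_less_at by blast
qed

lemma alt_le_iff_not_less: "alt_le x y \<longleftrightarrow> \<not> alt_less y x"
  unfolding alt_le_def using alt_less_linear alt_less_trans alt_less_irrefl by blast

lemma alt_le_not_less_at: "alt_le x y \<Longrightarrow> \<not> alt_less_at y x k"
  unfolding alt_le_iff_not_less alt_less_iff_alt_less_at by blast

lemma sfx_sfx: "sfx (sfx x a) b = sfx x (a + b)"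
  unfolding sfx_def by (simp add: add.assoc)

lemma sfx_0: "sfx x 0 = x"
  unfolding sfx_def by simp

lemma alt_less_at_sfx_even:
  assumes "alt_less_at x y (s + r)" and "even s"
  shows "alt_less_at (sfx x s) (sfx y s) r"
  using assms unfolding alt_less_at_def sfx_def
  by (auto simp: power_add ac_simps)

lemma alt_less_at_sfx_odd:
  assumes "alt_less_at x y (s + r)" and "odd s"
  shows "alt_less_at (sfx y s) (sfx x s) r"
proof -
  have "(-1::int) ^ (s + r + 1) * (x (s + r) - y (s + r)) = (-1) ^ (r + 1) * (y (s + r) - x (s + r))"
    using \<open>odd s\<close> by (simp add: power_add algebra_simps)
  then show ?thesis
    using assms unfolding alt_less_at_def sfx_def by auto
qed

lemma sfx_mult_period: "sfx x n = x \<Longrightarrow> sfx x (q * n) = x"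
  by (induction q) (simp_all add: sfx_0, metis sfx_sfx)

lemma alt_le_sfx_if_periodic:
  assumes period: "sfx x n = x" and "0 < n"
    and shifts: "\<And>m. 0 < m \<Longrightarrow> m < n \<Longrightarrow> alt_le x (sfx x m)"
  shows "alt_le x (sfx x j)"
proof -
  have "sfx x j = sfx x (j mod n)"
    using sfx_sfx[of x "j div n * n" "j mod n"] sfx_mult_period[OF period] by simp
  then show ?thesis
    using shifts[of "j mod n"] \<open>0 < n\<close> by (cases "j mod n = 0") (auto simp: sfx_0 alt_le_def)
qed

definition prefix_cycle :: "(nat \<Rightarrow> int) \<Rightarrow> nat \<Rightarrow> nat \<Rightarrow> int" where
  "prefix_cycle d n = (\<lambda>i. d (i mod n))"

lemma prefix_cycle_below: "i < n \<Longrightarrow> prefix_cycle d n i = d i"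
  unfolding prefix_cycle_def by simp

lemma sfx_prefix_cycle_period: "sfx (prefix_cycle d n) n = prefix_cycle d n"
  unfolding prefix_cycle_def sfx_def by simp

text \<open>If \<open>d\<close> beat the cycle at position \<open>s + r\<close>, with \<open>s\<close> a multiple of the even period and
  \<open>r\<close> below it, the shift of \<open>d\<close> by \<open>s\<close> would beat \<open>d\<close> at position \<open>r\<close>.\<close>

lemma prefix_cycle_even_alt_le:
  assumes lyndon: "\<forall>j. alt_le d (sfx d j)" and "even n"
  shows "alt_le (prefix_cycle d n) d"
proof -
  let ?x = "prefix_cycle d n"
  have "\<not> alt_less_at d ?x j" for j
  proof
    assume "alt_less_at d ?x j"
    define s where "s = j div n * n"
    define r where "r = j mod n"
    have "alt_less_at (sfx d s) (sfx ?x s) r"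
      using alt_less_at_sfx_even \<open>alt_less_at d ?x j\<close> \<open>even n\<close>
      unfolding s_def r_def by simp
    moreover have "sfx ?x s = ?x"
      unfolding s_def by (rule sfx_mult_period[OF sfx_prefix_cycle_period])
    moreover have "?x i = d i" if "i \<le> r" for i
      using that unfolding r_def prefix_cycle_def
      by (cases "n = 0") (simp_all add: order_le_less_trans)
    ultimately have "alt_less_at (sfx d s) d r"
      using alt_less_at_cong[of r "sfx d s" "sfx d s" ?x d] by simp
    then show False
      using lyndon alt_le_not_less_at by blast
  qed
  then show ?thesis
    unfolding alt_le_iff_not_less alt_less_iff_alt_less_at by blast
qed

lemma even_shift_border_contradicts_alt_lyndon:
  assumes lyndon: "\<forall>j. alt_le d1 (sfx d1 j)"
    and less: "alt_less_at d1 d2 k"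
    and "even m" and "0 < m" and "m \<le> k"
    and border: "\<And>i. i \<le> k - m \<Longrightarrow> d2 (m + i) = d2 i"
  shows False
proof -
  have "alt_less_at (sfx d1 m) (sfx d2 m) (k - m)"
    using alt_less_at_sfx_even[of d1 d2 m "k - m"] less \<open>even m\<close> \<open>m \<le> k\<close> by simp
  moreover have "sfx d2 m i = d1 i" if "i \<le> k - m" for i
    using border[OF that] less that \<open>0 < m\<close> \<open>m \<le> k\<close>
    unfolding sfx_def alt_less_at_def by auto
  ultimately have "alt_less_at (sfx d1 m) d1 (k - m)"
    using alt_less_at_cong[of "k - m" "sfx d1 m" "sfx d1 m" "sfx d2 m" d1] by simp
  then show False
    using lyndon alt_le_not_less_at by blast
qed

lemma prefix_cycle_shift_not_less:
  assumes lyndon1: "\<forall>j. alt_le d1 (sfx d1 j)" and lyndon2: "\<forall>j. alt_le d2 (sfx d2 j)"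
    and d1_less: "alt_less_at d1 d2 k"
    and "even n" and "k < n" and "n \<le> k + 2"
    and "0 < m" and "m < n"
  shows "\<not> alt_less_at (sfx (prefix_cycle d2 n) m) (prefix_cycle d2 n) p"
  using \<open>0 < m\<close> \<open>m < n\<close>
proof (induction p arbitrary: m rule: less_induct)
  case (less p)
  let ?x = "prefix_cycle d2 n"
  show ?case
  proof
    assume shift_less: "alt_less_at (sfx ?x m) ?x p"
    have agree: "?x (m + i) = ?x i" if "i < p" for i
      using shift_less that unfolding alt_less_at_def sfx_def by auto
    consider "p < n - m" | "n - m \<le> p" "even m" | "n - m \<le> p" "odd m" by linarith
    then show False
    proof cases
      case 1
      then have "alt_less_at (sfx d2 m) d2 p"
        using shift_less alt_less_at_cong[of p "sfx ?x m" "sfx d2 m" ?x d2]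
        by (simp add: sfx_def prefix_cycle_below)
      then show False
        using lyndon2 alt_le_not_less_at by blast
    next
      case 2
      have "m \<le> k"
        using \<open>even m\<close> \<open>even n\<close> \<open>m < n\<close> \<open>n \<le> k + 2\<close> by (auto elim!: evenE)
      moreover have "d2 (m + i) = d2 i" if "i \<le> k - m" for i
        using agree[of i] that \<open>k < n\<close> \<open>m \<le> k\<close> \<open>n - m \<le> p\<close> by (simp add: prefix_cycle_below)
      ultimately show False
        using even_shift_border_contradicts_alt_lyndon[OF lyndon1 d1_less] \<open>even m\<close> \<open>0 < m\<close> by blast
    next
      case 3
      define t where "t = n - m"
      have "odd t"
        using \<open>odd m\<close> \<open>even n\<close> \<open>m < n\<close> unfolding t_def by simp
      have "alt_less_at (sfx ?x t) (sfx (sfx ?x m) t) (p - t)"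
        using alt_less_at_sfx_odd[of "sfx ?x m" ?x t "p - t"] shift_less \<open>odd t\<close> \<open>n - m \<le> p\<close>
        unfolding t_def by simp
      moreover have "sfx (sfx ?x m) t = ?x"
        using \<open>m < n\<close> by (simp add: sfx_sfx t_def sfx_prefix_cycle_period)
      ultimately have "alt_less_at (sfx ?x t) ?x (p - t)"
        by simp
      moreover have "p - t < p" "0 < t" "t < n"
        using \<open>0 < m\<close> \<open>m < n\<close> \<open>n - m \<le> p\<close> unfolding t_def by auto
      ultimately show False
        using less.IH by blast
    qed
  qed
qed

lemma weak_alt_lyndon_between:
  assumes L1: "alt_lyndon A d1" and L2: "alt_lyndon A d2" and "alt_less d1 d2"
  shows "\<exists>x. alt_lyndon A x \<and> weak_word x \<and> alt_le d1 x \<and> alt_le x d2"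
proof -
  obtain k where d1_less: "alt_less_at d1 d2 k"
    using \<open>alt_less d1 d2\<close> unfolding alt_less_iff_alt_less_at by blast
  define n where "n = (if even (k + 1) then k + 1 else k + 2)"
  have n: "even n" "k < n" "n \<le> k + 2"
    unfolding n_def by auto
  let ?x = "prefix_cycle d2 n"
  have lyndon1: "\<forall>j. alt_le d1 (sfx d1 j)" and lyndon2: "\<forall>j. alt_le d2 (sfx d2 j)"
    using L1 L2 unfolding alt_lyndon_def by blast+
  have "alt_le ?x (sfx ?x j)" for j
  proof (rule alt_le_sfx_if_periodic[OF sfx_prefix_cycle_period])
    show "0 < n" using n by simp
    show "alt_le ?x (sfx ?x m)" if "0 < m" "m < n" for m
      using prefix_cycle_shift_not_less[OF lyndon1 lyndon2 d1_less n that]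
      unfolding alt_le_iff_not_less alt_less_iff_alt_less_at by blast
  qed
  moreover have "\<forall>i. ?x i \<in> A"
    using L2 unfolding alt_lyndon_def prefix_cycle_def by blast
  ultimately have "alt_lyndon A ?x"
    unfolding alt_lyndon_def by blast
  moreover have "weak_word ?x"
    unfolding weak_word_def using sfx_prefix_cycle_period n(2) by (metis gr0I not_less0)
  moreover have "alt_less_at d1 ?x k"
    using d1_less alt_less_at_cong[of k d1 d1 d2 ?x] prefix_cycle_below[of _ n d2] n(2) by simp
  then have "alt_le d1 ?x"
    unfolding alt_le_def alt_less_iff_alt_less_at by blast
  moreover have "alt_le ?x d2"
    using prefix_cycle_even_alt_le[OF lyndon2 n(1)] .
  ultimately show ?thesis by blast
qed

lemma alt_lyndon_system_antimono:
  "alt_le d d' \<Longrightarrow> alt_lyndon_system A d' \<subseteq> alt_lyndon_system A d"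
  unfolding alt_lyndon_system_def using alt_le_trans by blast

lemma factors_mono: "S \<subseteq> T \<Longrightarrow> factors S n \<subseteq> factors T n"
  unfolding factors_def by blast

lemma finite_factors_alt_lyndon_system:
  "finite A \<Longrightarrow> finite (factors (alt_lyndon_system A d) n)"
  by (rule finite_subset[OF _ finite_lists_length_eq[of A n]])
    (auto simp: factors_def alt_lyndon_system_def)

lemma factors_alt_lyndon_system_nonempty:
  "alt_lyndon A d \<Longrightarrow> factors (alt_lyndon_system A d) n \<noteq> {}"
  unfolding factors_def alt_lyndon_system_def alt_lyndon_def by blast

lemma attached_between:
  assumes "finite A" and "alt_lyndon A d2"
    and "alt_le d1 x" and "alt_le x d2"
    and att1: "attached A \<beta> d1" and att2: "attached A \<beta> d2"
  shows "attached A \<beta> x"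
proof -
  define H where "H d m = card (factors (alt_lyndon_system A d) m)" for d m
  have "H d' m \<le> H d m" if "alt_le d d'" for d d' m
    unfolding H_def
    by (rule card_mono[OF finite_factors_alt_lyndon_system[OF \<open>finite A\<close>]
          factors_mono[OF alt_lyndon_system_antimono[OF that]]])
  then have "H d2 m \<le> H x m \<and> H x m \<le> H d1 m" for m
    using assms(3,4) by blast
  moreover have "0 < H d2 m" for m
    unfolding H_def using factors_alt_lyndon_system_nonempty[OF \<open>alt_lyndon A d2\<close>]
    finite_factors_alt_lyndon_system[OF \<open>finite A\<close>] by (simp add: card_gt_0_iff)
  ultimately have bounds: "ln (H d2 m) / m \<le> ln (H x m) / m \<and> ln (H x m) / m \<le> ln (H d1 m) / m" for m
    by (meson divide_right_mono ln_le_cancel_iff of_nat_0_le_iff of_nat_0_less_iff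
        of_nat_le_iff order_less_le_trans)
  have "(\<lambda>m. ln (H x m) / m) \<longlonglongrightarrow> ln \<beta>"
    by (rule tendsto_sandwich[where f = "\<lambda>m. ln (H d2 m) / m" and h = "\<lambda>m. ln (H d1 m) / m"])
      (use bounds att1 att2 in \<open>simp_all add: attached_def H_def\<close>)
  then show ?thesis
    unfolding attached_def H_def .
qed

theorem proposition9:
  fixes A :: "int set" and \<beta> :: real
  assumes "finite A"
    and "\<beta> \<ge> 1"
    and "\<exists>d1 d2. d1 \<noteq> d2 \<and> alt_lyndon A d1 \<and> attached A \<beta> d1
                   \<and> alt_lyndon A d2 \<and> attached A \<beta> d2"
  shows "\<exists>d. alt_lyndon A d \<and> weak_word d \<and> attached A \<beta> d"
proof -
  have *: "\<exists>d. alt_lyndon A d \<and> weak_word d \<and> attached A \<beta> d"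
    if "alt_lyndon A d1" "attached A \<beta> d1" "alt_lyndon A d2" "attached A \<beta> d2" "alt_less d1 d2"
    for d1 d2
    using weak_alt_lyndon_between[of A d1 d2] attached_between[OF \<open>finite A\<close>] that by blast
  from assms(3) obtain d1 d2 where "d1 \<noteq> d2"
    and "alt_lyndon A d1" "attached A \<beta> d1" "alt_lyndon A d2" "attached A \<beta> d2"
    by blast
  with alt_less_linear * show ?thesis
    by blast
qed

end
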